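(* For any $n\ge 1$, every longest saturated chain from $0^n$ to $12^{n-1}$ in $(\mathsf{Tr}(n),\preccurlyeq)$ has length $2n-1$. Moreover, a triword $u\in\mathsf{Tr}(n)$ belongs to such a longest saturated chain if and only if, whenever $u_i=0$, one has $u_j=0$ for all $j\ge i$.
   Context: A triword of size $n$ is a word $u=u_1\cdots u_n$ with $u_i\in\{0,1,2\}$, $u_1\ne 2$, and such that $u_i=0$ implies $u_j\neq 1$ for all $j>i$; $\mathsf{Tr}(n)$ is their set, ordered componentwise ($u\preccurlyeq v$ iff $u_i\le v_i$ for all $i$); its minimum is $0^n$ and its maximum is $12^{n-1}$. A saturated chain $x_1\lessdot\cdots\lessdot x_r$ (successive covering relations) has length $r-1$. *)

theory Defs
  imports Main
begin

text \<open>Triwords of size n, as lists of length n (0-based indices).\<close>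
definition triword :: "nat \<Rightarrow> nat list \<Rightarrow> bool" where
  "triword n u \<longleftrightarrow> length u = n \<and> set u \<subseteq> {0,1,2} \<and> (n \<ge> 1 \<longrightarrow> u!0 \<noteq> 2) \<and>
     (\<forall>i j. i < j \<and> j < n \<and> u!i = 0 \<longrightarrow> u!j \<noteq> 1)"

definition Tr :: "nat \<Rightarrow> nat list set" where
  "Tr n = {u. triword n u}"

definition tr_le :: "nat list \<Rightarrow> nat list \<Rightarrow> bool" where
  "tr_le u v \<longleftrightarrow> list_all2 (\<le>) u v"

definition tr_covers :: "nat \<Rightarrow> nat list \<Rightarrow> nat list \<Rightarrow> bool" where
  "tr_covers n u v \<longleftrightarrow> u \<in> Tr n \<and> v \<in> Tr n \<and> tr_le u v \<and> u \<noteq> v \<and>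
     \<not> (\<exists>w \<in> Tr n. tr_le u w \<and> tr_le w v \<and> w \<noteq> u \<and> w \<noteq> v)"

definition sat_chain :: "nat \<Rightarrow> nat list list \<Rightarrow> bool" where
  "sat_chain n xs \<longleftrightarrow> xs \<noteq> [] \<and> set xs \<subseteq> Tr n \<and>
     (\<forall>i. i + 1 < length xs \<longrightarrow> tr_covers n (xs!i) (xs!(i+1)))"

definition chain_length :: "nat list list \<Rightarrow> nat" where
  "chain_length xs = length xs - 1"

definition tr_bot :: "nat \<Rightarrow> nat list" where
  "tr_bot n = replicate n 0"

definition tr_top :: "nat \<Rightarrow> nat list" where
  "tr_top n = 1 # replicate (n - 1) 2"

definition sat_chain_bot_top :: "nat \<Rightarrow> nat list list \<Rightarrow> bool" where
  "sat_chain_bot_top n xs \<longleftrightarrow> sat_chain n xs \<and> hd xs = tr_bot n \<and> last xs = tr_top n"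

definition longest_sat_chain :: "nat \<Rightarrow> nat list list \<Rightarrow> bool" where
  "longest_sat_chain n xs \<longleftrightarrow> sat_chain_bot_top n xs \<and>
     (\<forall>ys. sat_chain_bot_top n ys \<longrightarrow> chain_length ys \<le> chain_length xs)"

end

theory Submission
  imports Defs
begin

text \<open>The weight of a triword, the sum of its letters, strictly increases along the componentwise
  order; it is 0 at the bottom and 2n - 1 at the top, so a saturated chain has length at most
  2n - 1, with equality exactly when every cover raises the weight by one. A triword whose zeros
  form a suffix can be lowered to the bottom and raised to the top by steps that increase one
  letter by one, which yields a chain of length 2n - 1 through it. Conversely, along such a chain
  no letter grows by more than one per step; so if u ! i = 0 and u ! j = 2 with i < j,
  some earlier element of the chain has letter 1 at j and, lying below u, letter 0 at i, which is
  forbidden in a triword.\<close>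

lemma sum_list_mono_list_all2:
  fixes xs ys :: "'a::ordered_comm_monoid_add list"
  assumes "list_all2 (\<le>) xs ys"
  shows "sum_list xs \<le> sum_list ys"
  using assms by (induction rule: list_all2_induct) (auto intro: add_mono)

lemma sum_list_strict_mono_list_all2:
  fixes xs ys :: "'a::ordered_cancel_comm_monoid_add list"
  assumes "list_all2 (\<le>) xs ys" and "xs \<noteq> ys"
  shows "sum_list xs < sum_list ys"
  using assms
proof (induction rule: list_all2_induct)
  case (Cons x xs y ys)
  show ?case
  proof (cases "x = y")
    case True
    then show ?thesis using Cons by (simp add: add_strict_left_mono)
  next
    case False
    then show ?thesis
      using Cons.hyps sum_list_mono_list_all2[OF Cons.hyps(2)] by (simp add: add_less_le_mono)
  qed
qed simp

lemma nth_le_sum_list_list_all2: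
  fixes xs ys :: "'a::ordered_comm_monoid_add list"
  assumes "list_all2 (\<le>) xs ys" and "j < length xs"
  shows "sum_list xs + ys ! j \<le> sum_list ys + xs ! j"
  using assms
proof (induction arbitrary: j rule: list_all2_induct)
  case (Cons x xs y ys)
  show ?case
  proof (cases j)
    case 0
    then show ?thesis
      using add_mono[OF sum_list_mono_list_all2[OF Cons.hyps(2)] order_refl[of y]]
      by (simp add: ac_simps add_left_mono)
  next
    case (Suc k)
    then show ?thesis
      using add_mono[OF Cons.hyps(1) Cons.IH[of k]] Cons.prems by (simp add: ac_simps)
  qed
qed simp

lemma tr_le_refl: "tr_le u u"
  by (simp add: tr_le_def list_all2_refl)

lemma tr_le_trans: "tr_le u v \<Longrightarrow> tr_le v w \<Longrightarrow> tr_le u w"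
  unfolding tr_le_def by (rule list_all2_trans) auto

lemma Tr_iff_nth:
  "u \<in> Tr n \<longleftrightarrow> length u = n \<and> (\<forall>i<n. u ! i \<le> 2) \<and> (0 < n \<longrightarrow> u ! 0 \<noteq> 2) \<and>
     (\<forall>i j. i < j \<and> j < n \<and> u ! i = 0 \<longrightarrow> u ! j \<noteq> 1)"
proof -
  have "set u \<subseteq> {0, 1, 2} \<longleftrightarrow> (\<forall>i<length u. u ! i \<le> (2::nat))"
    by (fastforce simp: in_set_conv_nth)
  then show ?thesis
    unfolding Tr_def triword_def by (auto simp: Suc_le_eq)
qed

lemma list_update_in_Tr:
  assumes "u \<in> Tr n" "i < n" "x \<le> 2" "i = 0 \<Longrightarrow> x \<noteq> 2"
    "\<And>a. x = 1 \<Longrightarrow> a < i \<Longrightarrow> u ! a \<noteq> 0"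
    "\<And>b. x = 0 \<Longrightarrow> i < b \<Longrightarrow> b < n \<Longrightarrow> u ! b \<noteq> 1"
  shows "u[i := x] \<in> Tr n"
proof -
  have u: "length u = n" "\<forall>k<n. u ! k \<le> 2" "0 < n \<longrightarrow> u ! 0 \<noteq> 2"
    "\<forall>a b. a < b \<and> b < n \<and> u ! a = 0 \<longrightarrow> u ! b \<noteq> 1"
    using assms(1) unfolding Tr_iff_nth by auto
  have pairs: "\<forall>a b. a < b \<and> b < n \<and> u[i := x] ! a = 0 \<longrightarrow> u[i := x] ! b \<noteq> 1"
  proof (intro allI impI)
    fix a b assume "a < b \<and> b < n \<and> u[i := x] ! a = 0"
    then show "u[i := x] ! b \<noteq> 1"
      using u assms(2,5,6) by (cases "a = i"; cases "b = i") (force simp: nth_list_update)+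
  qed
  have "\<forall>k<n. u[i := x] ! k \<le> 2" "0 < n \<longrightarrow> u[i := x] ! 0 \<noteq> 2"
    using u assms(2-4) by (auto simp: nth_list_update)
  with pairs show ?thesis
    using u(1) unfolding Tr_iff_nth by simp
qed

definition zero_suffix :: "nat list \<Rightarrow> bool" where
  "zero_suffix u \<longleftrightarrow> (\<forall>i j. i \<le> j \<and> j < length u \<and> u ! i = 0 \<longrightarrow> u ! j = 0)"

lemma zero_suffixI:
  assumes "\<And>i. i < length u \<Longrightarrow> u ! i = 0 \<longleftrightarrow> p \<le> i"
  shows "zero_suffix u"
  using assms unfolding zero_suffix_def by (meson order.trans order_le_less_trans)

lemma zero_suffixE:
  assumes "zero_suffix u"
  obtains p where "p \<le> length u" "\<And>i. i < length u \<Longrightarrow> u ! i = 0 \<longleftrightarrow> p \<le> i"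
proof
  define p where "p = (LEAST p. \<forall>j. p \<le> j \<and> j < length u \<longrightarrow> u ! j = 0)"
  show "p \<le> length u"
    unfolding p_def by (rule Least_le) simp
  fix i assume "i < length u"
  show "u ! i = 0 \<longleftrightarrow> p \<le> i"
  proof
    assume "u ! i = 0"
    then show "p \<le> i"
      using assms \<open>i < length u\<close> unfolding p_def zero_suffix_def by (intro Least_le) blast
  next
    assume "p \<le> i"
    moreover have "\<forall>j. p \<le> j \<and> j < length u \<longrightarrow> u ! j = 0"
      unfolding p_def by (rule LeastI[of _ "length u"]) simp
    ultimately show "u ! i = 0"
      using \<open>i < length u\<close> by blast
  qed
qed

lemma zero_suffix_list_update_nonzero:
  assumes "zero_suffix u" "u ! i \<noteq> 0" "x \<noteq> 0"
  shows "zero_suffix (u[i := x])"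
proof -
  have "u[i := x] ! k = 0 \<longleftrightarrow> u ! k = 0" if "k < length u" for k
    using assms(2,3) that by (cases "k = i") auto
  then show ?thesis
    using assms(1) unfolding zero_suffix_def length_list_update by (meson order_le_less_trans)
qed

definition unit_step :: "nat \<Rightarrow> nat list \<Rightarrow> nat list \<Rightarrow> bool" where
  "unit_step n u v \<longleftrightarrow> u \<in> Tr n \<and> v \<in> Tr n \<and> (\<exists>i<n. v = u[i := Suc (u ! i)])"

lemma unit_stepI:
  "u \<in> Tr n \<Longrightarrow> v \<in> Tr n \<Longrightarrow> i < n \<Longrightarrow> v = u[i := Suc (u ! i)] \<Longrightarrow> unit_step n u v"
  unfolding unit_step_def by blast

lemma unit_step_sum_list:
  assumes "unit_step n u v"
  shows "sum_list v = Suc (sum_list u)"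
  using assms unfolding unit_step_def Tr_iff_nth by (auto simp: sum_list_update)

lemma unit_step_tr_le:
  assumes "unit_step n u v"
  shows "tr_le u v"
  using assms unfolding unit_step_def Tr_iff_nth tr_le_def list_all2_conv_all_nth
  by (auto simp: nth_list_update)

lemma unit_step_covers:
  assumes "unit_step n u v"
  shows "tr_covers n u v"
proof -
  have "\<not> (tr_le u w \<and> tr_le w v \<and> w \<noteq> u \<and> w \<noteq> v)" for w
  proof
    assume "tr_le u w \<and> tr_le w v \<and> w \<noteq> u \<and> w \<noteq> v"
    then have "sum_list u < sum_list w" "sum_list w < sum_list v"
      using sum_list_strict_mono_list_all2 unfolding tr_le_def by metis+
    then show False
      using unit_step_sum_list[OF assms] by simp
  qed
  moreover have "u \<noteq> v"
    using unit_step_sum_list[OF assms] by auto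
  ultimately show ?thesis
    using assms unit_step_tr_le[OF assms] unfolding tr_covers_def unit_step_def by blast
qed

lemma sat_chain_snoc:
  assumes "sat_chain n xs" "tr_covers n (last xs) z"
  shows "sat_chain n (xs @ [z])"
proof -
  have "xs \<noteq> []" "set xs \<subseteq> Tr n" "z \<in> Tr n"
    using assms unfolding sat_chain_def tr_covers_def by auto
  moreover have "tr_covers n ((xs @ [z]) ! i) ((xs @ [z]) ! (i + 1))"
    if "i + 1 < length xs + 1" for i
  proof (cases "i + 1 < length xs")
    case True
    then show ?thesis using assms(1) unfolding sat_chain_def by (simp add: nth_append)
  next
    case False
    then have "i = length xs - 1" using that by simp
    then show ?thesis
      using assms(2) \<open>xs \<noteq> []\<close> by (simp add: nth_append last_conv_nth)
  qed
  ultimately show ?thesis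
    unfolding sat_chain_def by auto
qed

lemma sat_chain_extend:
  assumes "(unit_step n)\<^sup>*\<^sup>* (last xs) v" "sat_chain n xs"
  shows "\<exists>ys. sat_chain n ys \<and> hd ys = hd xs \<and> last ys = v \<and> set xs \<subseteq> set ys \<and>
    length ys + sum_list (last xs) = length xs + sum_list v"
  using assms(1)
proof (induction rule: rtranclp_induct)
  case base
  then show ?case using assms(2) by blast
next
  case (step w z)
  then obtain ys where ys: "sat_chain n ys" "hd ys = hd xs" "last ys = w" "set xs \<subseteq> set ys"
    "length ys + sum_list (last xs) = length xs + sum_list w" by blast
  then have "sat_chain n (ys @ [z])"
    using sat_chain_snoc unit_step_covers[OF step.hyps(2)] by blast
  moreover have "ys \<noteq> []"
    using ys(1) unfolding sat_chain_def by blast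
  ultimately show ?case
    using ys unit_step_sum_list[OF step.hyps(2)] by (intro exI[of _ "ys @ [z]"]) auto
qed

lemma sat_chain_tr_le:
  assumes "sat_chain n xs" "a \<le> b" "b < length xs"
  shows "tr_le (xs ! a) (xs ! b)"
  using assms(2,3)
proof (induction b rule: dec_induct)
  case (step m)
  then have "tr_le (xs ! m) (xs ! Suc m)"
    using assms(1) unfolding sat_chain_def tr_covers_def by simp
  with step show ?case
    using tr_le_trans Suc_lessD by blast
qed (rule tr_le_refl)

lemma sat_chain_sum_list_gap:
  assumes "sat_chain n xs" "a \<le> b" "b < length xs"
  shows "sum_list (xs ! a) + (b - a) \<le> sum_list (xs ! b)"
  using assms(2,3)
proof (induction b rule: dec_induct)
  case (step m)
  then have "tr_le (xs ! m) (xs ! Suc m)" "xs ! m \<noteq> xs ! Suc m"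
    using assms(1) unfolding sat_chain_def tr_covers_def by simp_all
  then have "sum_list (xs ! m) < sum_list (xs ! Suc m)"
    using sum_list_strict_mono_list_all2 unfolding tr_le_def by blast
  then show ?case
    using step by (simp add: Suc_diff_le)
qed simp

lemma tr_bot_in_Tr: "tr_bot n \<in> Tr n"
  unfolding Tr_iff_nth tr_bot_def by simp

lemma zero_suffix_tr_bot: "zero_suffix (tr_bot n)"
  unfolding zero_suffix_def tr_bot_def by simp

lemma sum_list_tr_bot: "sum_list (tr_bot n) = 0"
  unfolding tr_bot_def by (simp add: sum_list_replicate)

lemma sum_list_tr_top: "n \<ge> 1 \<Longrightarrow> sum_list (tr_top n) = 2 * n - 1"
  unfolding tr_top_def by (simp add: sum_list_replicate)

lemma nth_tr_top: "i < n \<Longrightarrow> tr_top n ! i = (if i = 0 then 1 else 2)"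
  unfolding tr_top_def by (auto simp: nth_Cons' nth_replicate)

text \<open>Lower a 2 to a 1 if there is one, otherwise turn the last nonzero letter (a 1) into a 0.\<close>
lemma unit_step_predecessor:
  assumes "u \<in> Tr n" "zero_suffix u" "u \<noteq> tr_bot n"
  obtains w where "zero_suffix w" "unit_step n w u"
proof -
  have u: "length u = n" "\<And>k. k < n \<Longrightarrow> u ! k \<le> 2"
    using assms(1) unfolding Tr_iff_nth by auto
  obtain p where p: "p \<le> n" "\<And>k. k < n \<Longrightarrow> u ! k = 0 \<longleftrightarrow> p \<le> k"
    using assms(2) u(1) by (auto elim: zero_suffixE)
  show ?thesis
  proof (cases "\<exists>i<n. u ! i = 2")
    case True
    then obtain i where i: "i < n" "u ! i = 2" by blast
    then have "i < p" using p(2) by fastforce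
    define w where "w = u[i := 1]"
    have w: "w \<in> Tr n"
      unfolding w_def using assms(1) i \<open>i < p\<close> p(2) by (intro list_update_in_Tr) auto
    have step: "u = w[i := Suc (w ! i)]"
      using i u(1) unfolding w_def
      by (metis One_nat_def list_update_id list_update_overwrite nth_list_update_eq numeral_2_eq_2)
    have "zero_suffix w"
      unfolding w_def using i by (intro zero_suffix_list_update_nonzero[OF assms(2)]) auto
    then show ?thesis
      using unit_stepI[OF w assms(1) i(1) step] by (rule that)
  next
    case False
    have "0 < p"
    proof (rule ccontr)
      assume "\<not> 0 < p"
      then have "u = tr_bot n"
        using p(2) u(1) unfolding tr_bot_def by (intro nth_equalityI) auto
      with assms(3) show False ..
    qed
    define m where "m = p - 1"
    have m: "m < n" "\<And>k. k < n \<Longrightarrow> u ! k = 0 \<longleftrightarrow> m < k"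
      using p \<open>0 < p\<close> unfolding m_def by auto
    have "u ! m \<noteq> 0" "u ! m \<noteq> 2"
      using m False by auto
    then have "u ! m = 1"
      using u(2)[OF m(1)] by arith
    define w where "w = u[m := 0]"
    have w: "w \<in> Tr n"
      unfolding w_def by (rule list_update_in_Tr[OF assms(1) m(1)]) (use m(2) in fastforce)+
    have step: "u = w[m := Suc (w ! m)]"
      using m(1) u(1) \<open>u ! m = 1\<close> unfolding w_def
      by (metis One_nat_def list_update_id list_update_overwrite nth_list_update_eq)
    have "zero_suffix w"
      by (rule zero_suffixI[where p = m]) (use m u(1) in \<open>auto simp: w_def nth_list_update\<close>)
    then show ?thesis
      using unit_stepI[OF w assms(1) m(1) step] by (rule that)
  qed
qed

text \<open>Turn the first 0 into a 1 if there is one, otherwise raise a non-initial 1 to a 2.\<close>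
lemma unit_step_successor:
  assumes "u \<in> Tr n" "zero_suffix u" "u \<noteq> tr_top n" "n \<ge> 1"
  obtains w where "zero_suffix w" "unit_step n u w"
proof -
  have u: "length u = n" "\<And>k. k < n \<Longrightarrow> u ! k \<le> 2" "u ! 0 \<noteq> 2"
    using assms(1,4) unfolding Tr_iff_nth by auto
  obtain p where p: "p \<le> n" "\<And>k. k < n \<Longrightarrow> u ! k = 0 \<longleftrightarrow> p \<le> k"
    using assms(2) u(1) by (auto elim: zero_suffixE)
  show ?thesis
  proof (cases "p < n")
    case True
    define w where "w = u[p := 1]"
    have w: "w \<in> Tr n"
      unfolding w_def using assms(1) True p(2) by (intro list_update_in_Tr) auto
    have step: "w = u[p := Suc (u ! p)]"
      using p(2)[OF True] by (simp add: w_def)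
    have "zero_suffix w"
      by (rule zero_suffixI[where p = "Suc p"])
        (use p(2) u(1) True in \<open>auto simp: w_def nth_list_update\<close>)
    then show ?thesis
      using unit_stepI[OF assms(1) w True step] by (rule that)
  next
    case False
    then have nonzero: "\<And>k. k < n \<Longrightarrow> u ! k \<noteq> 0"
      using p(2) by fastforce
    have "length (tr_top n) = n"
      using assms(4) by (simp add: tr_top_def)
    then obtain i where i: "i < n" "u ! i \<noteq> tr_top n ! i"
      using assms(3) u(1) nth_equalityI by metis
    have "u ! 0 = 1"
      using nonzero[of 0] u(2)[of 0] u(3) assms(4) by auto
    then have "i \<noteq> 0"
      using i nth_tr_top[OF i(1)] by (cases "i = 0") auto
    then have "u ! i = 1"
      using i nth_tr_top[OF i(1)] nonzero[OF i(1)] u(2)[OF i(1)] by auto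
    define w where "w = u[i := 2]"
    have w: "w \<in> Tr n"
      unfolding w_def using assms(1) i(1) \<open>i \<noteq> 0\<close> by (intro list_update_in_Tr) auto
    have step: "w = u[i := Suc (u ! i)]"
      using \<open>u ! i = 1\<close> by (simp add: w_def numeral_2_eq_2)
    have "zero_suffix w"
      unfolding w_def using assms(2) nonzero i(1) by (intro zero_suffix_list_update_nonzero) auto
    then show ?thesis
      using unit_stepI[OF assms(1) w i(1) step] by (rule that)
  qed
qed

lemma unit_steps_from_tr_bot:
  assumes "u \<in> Tr n" "zero_suffix u"
  shows "(unit_step n)\<^sup>*\<^sup>* (tr_bot n) u"
  using assms
proof (induction "sum_list u" arbitrary: u rule: less_induct)
  case less
  show ?case
  proof (cases "u = tr_bot n")
    case False
    then obtain w where w: "zero_suffix w" "unit_step n w u"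
      using unit_step_predecessor less.prems by blast
    then have "(unit_step n)\<^sup>*\<^sup>* (tr_bot n) w"
      using less.hyps unit_step_sum_list[OF w(2)] unfolding unit_step_def by auto
    then show ?thesis
      using w(2) by (rule rtranclp.rtrancl_into_rtrancl)
  qed simp
qed

lemma unit_steps_to_tr_top:
  assumes "u \<in> Tr n" "zero_suffix u" "n \<ge> 1"
  shows "(unit_step n)\<^sup>*\<^sup>* u (tr_top n)"
  using assms
proof (induction "2 * n - sum_list u" arbitrary: u rule: less_induct)
  case less
  show ?case
  proof (cases "u = tr_top n")
    case False
    then obtain w where w: "zero_suffix w" "unit_step n u w"
      using unit_step_successor less.prems by blast
    have "w \<in> Tr n"
      using w(2) unfolding unit_step_def by blast
    then have "sum_list w \<le> 2 * n"
      using sum_list_mono2[of w "replicate n 2"] unfolding Tr_iff_nth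
      by (simp add: sum_list_replicate)
    then have "(unit_step n)\<^sup>*\<^sup>* w (tr_top n)"
      using less.hyps \<open>w \<in> Tr n\<close> w(1) less.prems(3) unit_step_sum_list[OF w(2)] by simp
    with w(2) show ?thesis
      by (rule converse_rtranclp_into_rtranclp)
  qed simp
qed

lemma sat_chain_bot_top_ends:
  assumes "sat_chain_bot_top n c"
  shows "c \<noteq> []" "c ! 0 = tr_bot n" "c ! (length c - 1) = tr_top n"
  using assms unfolding sat_chain_bot_top_def sat_chain_def
  by (auto simp: hd_conv_nth last_conv_nth)

lemma sat_chain_bot_top_length_le:
  assumes "sat_chain_bot_top n c" "n \<ge> 1"
  shows "chain_length c \<le> 2 * n - 1"
  using sat_chain_sum_list_gap[of n c 0 "length c - 1"] sat_chain_bot_top_ends[OF assms(1)] assms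
    sum_list_tr_bot sum_list_tr_top
  unfolding sat_chain_bot_top_def chain_length_def by simp

lemma sat_chain_bot_top_through_zero_suffix:
  assumes "u \<in> Tr n" "zero_suffix u" "n \<ge> 1"
  obtains c where "sat_chain_bot_top n c" "chain_length c = 2 * n - 1" "u \<in> set c"
proof -
  have "sat_chain n [tr_bot n]"
    unfolding sat_chain_def using tr_bot_in_Tr by simp
  then obtain xs where xs: "sat_chain n xs" "hd xs = tr_bot n" "last xs = u"
    "length xs = Suc (sum_list u)"
    using sat_chain_extend[of n "[tr_bot n]" u] unit_steps_from_tr_bot[OF assms(1,2)] sum_list_tr_bot
    by auto
  moreover obtain c where "sat_chain n c" "hd c = hd xs" "last c = tr_top n" "set xs \<subseteq> set c"
    "length c + sum_list u = length xs + sum_list (tr_top n)"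
    using sat_chain_extend[of n xs "tr_top n"] unit_steps_to_tr_top[OF assms] xs(1,3) by auto
  moreover have "u \<in> set xs"
    using xs(1,3) unfolding sat_chain_def by auto
  ultimately show ?thesis
    using that sum_list_tr_top[OF assms(3)] assms(3)
    unfolding sat_chain_bot_top_def chain_length_def by auto
qed

lemma longest_sat_chain_iff:
  assumes "n \<ge> 1"
  shows "longest_sat_chain n c \<longleftrightarrow> sat_chain_bot_top n c \<and> chain_length c = 2 * n - 1"
proof -
  obtain d where "sat_chain_bot_top n d" "chain_length d = 2 * n - 1"
    using sat_chain_bot_top_through_zero_suffix[OF tr_bot_in_Tr zero_suffix_tr_bot assms] by blast
  then show ?thesis
    using sat_chain_bot_top_length_le[OF _ assms] unfolding longest_sat_chain_def
    by (metis le_antisym)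
qed

lemma longest_chain_sum_list_nth:
  assumes "sat_chain_bot_top n c" "chain_length c = 2 * n - 1" "n \<ge> 1" "m < length c"
  shows "sum_list (c ! m) = m"
proof -
  have chain: "sat_chain n c"
    using assms(1) unfolding sat_chain_bot_top_def by blast
  note ends = sat_chain_bot_top_ends[OF assms(1)]
  have len: "length c - 1 = 2 * n - 1"
    using assms(2) unfolding chain_length_def .
  have "sum_list (c ! 0) + m \<le> sum_list (c ! m)"
    using sat_chain_sum_list_gap[OF chain _ assms(4), of 0] by simp
  moreover have "sum_list (c ! m) + (length c - 1 - m) \<le> sum_list (c ! (length c - 1))"
    using sat_chain_sum_list_gap[OF chain, of m "length c - 1"] assms(4) by simp
  ultimately show ?thesis
    using ends(2,3) len assms(3,4) sum_list_tr_bot[of n] sum_list_tr_top[of n] by simp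
qed

lemma longest_chain_letter_step:
  assumes "sat_chain_bot_top n c" "chain_length c = 2 * n - 1" "n \<ge> 1" "Suc m < length c" "j < n"
  shows "(c ! m) ! j \<le> (c ! Suc m) ! j" "(c ! Suc m) ! j \<le> Suc ((c ! m) ! j)"
proof -
  have "sat_chain n c"
    using assms(1) unfolding sat_chain_bot_top_def by blast
  then have le: "list_all2 (\<le>) (c ! m) (c ! Suc m)" and "c ! m \<in> Tr n"
    using sat_chain_tr_le[of n c m "Suc m"] assms(4) unfolding tr_le_def sat_chain_def by auto
  then have "j < length (c ! m)"
    using assms(5) unfolding Tr_iff_nth by simp
  with le show "(c ! m) ! j \<le> (c ! Suc m) ! j"
    by (simp add: list_all2_nthD)
  have "sum_list (c ! m) + (c ! Suc m) ! j \<le> sum_list (c ! Suc m) + (c ! m) ! j"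
    using nth_le_sum_list_list_all2[OF le \<open>j < length (c ! m)\<close>] .
  then show "(c ! Suc m) ! j \<le> Suc ((c ! m) ! j)"
    using longest_chain_sum_list_nth[OF assms(1-3)] assms(4) by simp
qed

lemma longest_chain_letter_intermediate_value:
  assumes "sat_chain_bot_top n c" "chain_length c = 2 * n - 1" "n \<ge> 1" "k < length c" "j < n"
    and "v \<le> (c ! k) ! j"
  shows "\<exists>m\<le>k. (c ! m) ! j = v"
proof -
  have "\<exists>m\<le>k. int ((c ! m) ! j) = int v"
  proof (rule nat0_intermed_int_val)
    show "\<forall>m<k. \<bar>int ((c ! (m + 1)) ! j) - int ((c ! m) ! j)\<bar> \<le> 1"
    proof (intro allI impI)
      fix m assume "m < k"
      with assms(4) have "Suc m < length c"
        by simp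
      from longest_chain_letter_step[OF assms(1-3) this assms(5)]
      show "\<bar>int ((c ! (m + 1)) ! j) - int ((c ! m) ! j)\<bar> \<le> 1"
        by simp
    qed
    show "int ((c ! 0) ! j) \<le> int v"
      using sat_chain_bot_top_ends(2)[OF assms(1)] assms(5) by (simp add: tr_bot_def)
    show "int v \<le> int ((c ! k) ! j)"
      using assms(6) by simp
  qed
  then show ?thesis
    by simp
qed

lemma zero_suffix_if_in_longest_chain:
  assumes "sat_chain_bot_top n c" "chain_length c = 2 * n - 1" "n \<ge> 1" "u \<in> set c"
  shows "zero_suffix u"
  unfolding zero_suffix_def
proof (intro allI impI)
  fix i j assume ij: "i \<le> j \<and> j < length u \<and> u ! i = 0"
  obtain k where k: "k < length c" "c ! k = u"
    using assms(4) by (auto simp: in_set_conv_nth)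
  have chain: "sat_chain n c"
    using assms(1) unfolding sat_chain_bot_top_def by blast
  then have in_Tr: "c ! m \<in> Tr n" if "m < length c" for m
    using that unfolding sat_chain_def by auto
  then have u: "length u = n" "\<And>k. k < n \<Longrightarrow> u ! k \<le> 2"
    "\<And>a b. a < b \<Longrightarrow> b < n \<Longrightarrow> u ! a = 0 \<Longrightarrow> u ! b \<noteq> 1"
    using k unfolding Tr_iff_nth by auto
  show "u ! j = 0"
  proof (rule ccontr)
    assume "u ! j \<noteq> 0"
    then have "i < j"
      using ij by (cases "i = j") auto
    then have "u ! j \<noteq> 1" "u ! j \<le> 2"
      using ij u by auto
    with \<open>u ! j \<noteq> 0\<close> have "1 \<le> (c ! k) ! j"
      using k(2) by simp
    then obtain m where m: "m \<le> k" "(c ! m) ! j = 1"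
      using longest_chain_letter_intermediate_value[OF assms(1-3) k(1)] ij u(1) by auto
    have cm: "c ! m \<in> Tr n"
      using in_Tr m(1) k(1) by simp
    then have "i < length (c ! m)"
      using ij u(1) unfolding Tr_iff_nth by simp
    moreover have "tr_le (c ! m) u"
      using sat_chain_tr_le[OF chain m(1) k(1)] k(2) by simp
    ultimately have "(c ! m) ! i \<le> u ! i"
      unfolding tr_le_def by (simp add: list_all2_nthD)
    then have "(c ! m) ! i = 0"
      using ij by simp
    moreover have "j < n"
      using ij u(1) by simp
    ultimately show False
      using cm \<open>i < j\<close> m(2) unfolding Tr_iff_nth by blast
  qed
qed

theorem lemma3p1:
  fixes n :: nat
  assumes "n \<ge> 1"
  shows "(\<forall>c. longest_sat_chain n c \<longrightarrow> chain_length c = 2 * n - 1) \<and>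
         (\<forall>u \<in> Tr n. (\<exists>c. longest_sat_chain n c \<and> u \<in> set c) \<longleftrightarrow>
             (\<forall>i < n. u!i = 0 \<longrightarrow> (\<forall>j. i \<le> j \<and> j < n \<longrightarrow> u!j = 0)))"
proof -
  have "(\<exists>c. longest_sat_chain n c \<and> u \<in> set c) \<longleftrightarrow> zero_suffix u" if "u \<in> Tr n" for u
    using sat_chain_bot_top_through_zero_suffix[OF that _ assms]
      zero_suffix_if_in_longest_chain[OF _ _ assms]
    unfolding longest_sat_chain_iff[OF assms] by metis
  moreover have "zero_suffix u \<longleftrightarrow> (\<forall>i < n. u!i = 0 \<longrightarrow> (\<forall>j. i \<le> j \<and> j < n \<longrightarrow> u!j = 0))"
    if "u \<in> Tr n" for u
    using that unfolding zero_suffix_def Tr_iff_nth by (meson order.trans order_le_less_trans)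
  ultimately show ?thesis
    using longest_sat_chain_iff[OF assms] by simp
qed

end
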